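(* For an $r$-graph $H$, $C_r(n,H)$ is bounded (for all $n$) by a constant $C(H)$ depending only on $H$ if and only if $H$ is not $2$-locally large.
   Context: An $r$-graph is an $r$-uniform hypergraph; $K_n^{(r)}$ is the complete $r$-graph on $n$ vertices. A copy of an $r$-graph $H$ in $K_n^{(r)}$ is a subhypergraph isomorphic to $H$. An $(n,r,H)$-local coloring with $k$ colors is a family of edge-colorings $f_v:E(K_n^{(r)})\to[k]$, one per vertex $v$, such that for every copy $T$ of $H$ there is $u\in V(T)$ with $f_u$ injective on $E(T)$. $C_r(n,H)$ is the minimum such $k$. Let $H$ be an $r$-graph on $m$ vertices and $\sigma:V(H)\to[m]$ a bijection. For $x\in V(H)$ and $1\le i\le r$, $T_x^i$ is the set of edges $e\ni x$ such that $\sigma(x)$ is the $i$-th smallest of the values $\sigma(v)$, $v\in e$. For $r+1\le i\le 2r+1$, $T_x^i$ is the set of edges $e\not\ni x$ such that $\sigma(x)$ is the $(i-r)$-th smallest among the values $\sigma(v)$, $v\in e\cup\{x\}$. (The sets $T_x^1,\dots,T_x^{2r+1}$ partition $E(H)$.) $H$ is $2$-locally large if there exists a bijection $\sigma:V(H)\to[m]$ such that for every vertex $x\in V(H)$ some $T_x^i$, $i\in[2r+1]$, contains at least two edges. *)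

theory Defs
  imports Main
begin

definition r_graph :: "nat \<Rightarrow> 'a set \<Rightarrow> 'a set set \<Rightarrow> bool" where
  "r_graph r V E \<longleftrightarrow> finite V \<and> (\<forall>e\<in>E. e \<subseteq> V \<and> card e = r)"

definition complete_edges :: "nat \<Rightarrow> nat \<Rightarrow> nat set set" where
  "complete_edges n r = {e. e \<subseteq> {0..<n} \<and> card e = r}"

text \<open>Copies of H in K_n^(r) are exactly the images of injective maps phi : V -> {0..<n}
  (vertex set phi ` V, edge set (image phi) ` E).\<close>
definition local_coloring ::
  "nat \<Rightarrow> nat \<Rightarrow> 'a set \<Rightarrow> 'a set set \<Rightarrow> nat \<Rightarrow> (nat \<Rightarrow> nat set \<Rightarrow> nat) \<Rightarrow> bool" where
  "local_coloring n r V E k f \<longleftrightarrow>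
     (\<forall>v\<in>{0..<n}. \<forall>e\<in>complete_edges n r. f v e \<in> {1..k}) \<and>
     (\<forall>\<phi>. inj_on \<phi> V \<and> \<phi> ` V \<subseteq> {0..<n} \<longrightarrow>
        (\<exists>u\<in>\<phi> ` V. inj_on (f u) ((\<lambda>e. \<phi> ` e) ` E)))"

definition C_r :: "nat \<Rightarrow> nat \<Rightarrow> 'a set \<Rightarrow> 'a set set \<Rightarrow> nat" where
  "C_r r n V E = (LEAST k. \<exists>f. local_coloring n r V E k f)"

definition T_class :: "nat \<Rightarrow> 'a set set \<Rightarrow> ('a \<Rightarrow> nat) \<Rightarrow> 'a \<Rightarrow> nat \<Rightarrow> 'a set set" where
  "T_class r E \<sigma> x i =
     (if 1 \<le> i \<and> i \<le> r then
        {e\<in>E. x \<in> e \<and> card {v\<in>e. \<sigma> v < \<sigma> x} + 1 = i}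
      else if r + 1 \<le> i \<and> i \<le> 2*r + 1 then
        {e\<in>E. x \<notin> e \<and> card {v\<in>e \<union> {x}. \<sigma> v < \<sigma> x} + 1 = i - r}
      else {})"

definition two_locally_large :: "nat \<Rightarrow> 'a set \<Rightarrow> 'a set set \<Rightarrow> bool" where
  "two_locally_large r V E \<longleftrightarrow>
     (\<exists>\<sigma>. bij_betw \<sigma> V {1..card V} \<and>
        (\<forall>x\<in>V. \<exists>i\<in>{1..2*r+1}. \<exists>e1 e2. e1 \<noteq> e2 \<and> e1 \<in> T_class r E \<sigma> x i \<and> e2 \<in> T_class r E \<sigma> x i))"

end

theory Submission
  imports Defs "HOL-Library.Ramsey"
begin

(* Whether e lies in T_x^i depends only on the relative order of e and x, so any injective
   labelling of V by numbers can stand in for sigma.  If H is not 2-locally large, let vertex v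
   colour an edge e by the index i with e in T_v^i, computed in the natural order of vertex
   labels: for a copy of H, the order it induces on V has a vertex x all of whose classes are
   singletons, so x sees the copy rainbow, and 2r+1 colours always suffice.
   Conversely, given a local colouring with k colours of K_N, colour each (r+1)-set
   S = {s_0 < ... < s_r} by its table of colours f_{s_j}(S - {s_l}).  For N large, Ramsey's
   theorem gives |V|+1 vertices on which this table is constant; embed V below their maximum t
   along an order witnessing 2-local largeness.  An edge e in T_x^i is S - {s_l} for
   S = e \<union> {x} or S = e \<union> {t}, with x = s_j and (j, l) determined by i alone, so any two edges
   of one class get the same colour from x, and no vertex sees the copy rainbow. *)

definition rank :: "'a::linorder set \<Rightarrow> 'a \<Rightarrow> nat" where
  "rank S y = card {z \<in> S. z < y}"

definition unrank :: "'a::linorder set \<Rightarrow> nat \<Rightarrow> 'a" where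
  "unrank S = inv_into S (rank S)"

lemma rank_less_iff:
  assumes "finite S" "a \<in> S" "b \<in> S"
  shows "rank S a < rank S b \<longleftrightarrow> a < b"
proof -
  have less: "rank S u < rank S w" if "u \<in> S" "u < w" for u w
    unfolding rank_def using assms(1) that by (intro psubset_card_mono) auto
  show ?thesis
    using less[of a b] less[of b a] assms by (metis linorder_neq_iff order_less_asym)
qed

lemma rank_less_card:
  assumes "finite S" "y \<in> S"
  shows "rank S y < card S"
  unfolding rank_def using assms by (intro psubset_card_mono) auto

lemma bij_betw_rank:
  assumes "finite S"
  shows "bij_betw (rank S) S {..<card S}"
proof -
  have inj: "inj_on (rank S) S"
    by (rule inj_onI) (metis assms rank_less_iff linorder_neq_iff)
  moreover have "rank S ` S \<subseteq> {..<card S}"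
    using rank_less_card assms by auto
  moreover have "card (rank S ` S) = card {..<card S}"
    using card_image[OF inj] by simp
  ultimately show ?thesis
    by (simp add: bij_betw_def card_subset_eq)
qed

lemma unrank_rank:
  assumes "finite S" "y \<in> S"
  shows "unrank S (rank S y) = y"
  unfolding unrank_def using bij_betw_inv_into_left[OF bij_betw_rank] assms .

lemma unrank_in:
  assumes "finite S" "j < card S"
  shows "unrank S j \<in> S"
  unfolding unrank_def using bij_betwE[OF bij_betw_inv_into[OF bij_betw_rank]] assms by blast

lemma rank_unrank:
  assumes "finite S" "j < card S"
  shows "rank S (unrank S j) = j"
  unfolding unrank_def using bij_betw_inv_into_right[OF bij_betw_rank] assms by blast

definition order_equiv_on :: "'a set \<Rightarrow> ('a \<Rightarrow> 'b::linorder) \<Rightarrow> ('a \<Rightarrow> 'c::linorder) \<Rightarrow> bool" where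
  "order_equiv_on V \<sigma> \<tau> \<longleftrightarrow> (\<forall>v\<in>V. \<forall>w\<in>V. \<sigma> v < \<sigma> w \<longleftrightarrow> \<tau> v < \<tau> w)"

lemma order_equiv_on_inj_on:
  assumes "order_equiv_on V \<sigma> \<tau>" "inj_on \<sigma> V"
  shows "inj_on \<tau> V"
  using assms unfolding order_equiv_on_def inj_on_def by (metis linorder_neq_iff)

lemma order_equiv_on_into:
  assumes "finite V" "finite M" "card V \<le> card M"
  obtains \<tau> where "\<tau> ` V \<subseteq> M" "order_equiv_on V \<sigma> \<tau>"
proof
  define \<tau> where "\<tau> x = unrank M (rank (\<sigma> ` V) (\<sigma> x))" for x
  have rank_less: "rank (\<sigma> ` V) (\<sigma> x) < card M" if "x \<in> V" for x
    using rank_less_card[of "\<sigma> ` V" "\<sigma> x"] card_image_le[of V \<sigma>] assms that by simp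
  show "\<tau> ` V \<subseteq> M"
    using unrank_in[OF assms(2) rank_less] by (auto simp: \<tau>_def)
  show "order_equiv_on V \<sigma> \<tau>"
    unfolding order_equiv_on_def
  proof (intro ballI)
    fix v w assume "v \<in> V" "w \<in> V"
    then show "\<sigma> v < \<sigma> w \<longleftrightarrow> \<tau> v < \<tau> w"
      using rank_less_iff[of "\<sigma> ` V" "\<sigma> v" "\<sigma> w"] rank_less_iff[of M "\<tau> v" "\<tau> w"]
        unrank_in[OF assms(2) rank_less] rank_unrank[OF assms(2) rank_less] assms
      by (simp add: \<tau>_def)
  qed
qed

definition class_index :: "nat \<Rightarrow> ('a \<Rightarrow> 'b::linorder) \<Rightarrow> 'a \<Rightarrow> 'a set \<Rightarrow> nat" where
  "class_index r \<sigma> x e = (if x \<in> e then 1 else r + 1) + card {v \<in> e. \<sigma> v < \<sigma> x}"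

lemma class_index_range:
  assumes "finite e" "card e = r"
  shows "class_index r \<sigma> x e \<in> {1..2*r+1}"
proof -
  have "card {v \<in> e. \<sigma> v < \<sigma> x} \<le> r"
    using card_mono[of e "{v \<in> e. \<sigma> v < \<sigma> x}"] assms by auto
  then show ?thesis by (auto simp: class_index_def)
qed

lemma r_graph_edge:
  assumes "r_graph r V E" "e \<in> E"
  shows "e \<subseteq> V" "finite e" "card e = r"
  using assms finite_subset unfolding r_graph_def by auto

lemma T_class_iff:
  assumes "r_graph r V E"
  shows "e \<in> T_class r E \<sigma> x i \<longleftrightarrow> e \<in> E \<and> class_index r \<sigma> x e = i"
proof -
  have below: "card {v \<in> e' \<union> {x}. \<sigma> v < \<sigma> x} = card {v \<in> e'. \<sigma> v < \<sigma> x}" for e'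
    by (rule arg_cong[where f = card]) auto
  have "card {v \<in> e. \<sigma> v < \<sigma> x} < r" if "e \<in> E" "x \<in> e"
    using r_graph_edge[OF assms that(1)] that(2) psubset_card_mono[of e "{v \<in> e. \<sigma> v < \<sigma> x}"]
    by auto
  moreover have "card {v \<in> e. \<sigma> v < \<sigma> x} \<le> r" if "e \<in> E"
    using r_graph_edge[OF assms that] card_mono[of e "{v \<in> e. \<sigma> v < \<sigma> x}"] by auto
  ultimately show ?thesis
    unfolding T_class_def below class_index_def by auto
qed

lemma class_index_cong:
  assumes "order_equiv_on V \<sigma> \<tau>" "e \<subseteq> V" "x \<in> V"
  shows "class_index r \<sigma> x e = class_index r \<tau> x e"
proof -
  have "{v \<in> e. \<sigma> v < \<sigma> x} = {v \<in> e. \<tau> v < \<tau> x}"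
    using assms unfolding order_equiv_on_def by blast
  then show ?thesis by (simp add: class_index_def)
qed

lemma class_index_image:
  assumes "inj_on \<phi> V" "e \<subseteq> V" "x \<in> V"
  shows "class_index r (\<lambda>z. z) (\<phi> x) (\<phi> ` e) = class_index r \<phi> x e"
proof -
  have "{z \<in> \<phi> ` e. z < \<phi> x} = \<phi> ` {v \<in> e. \<phi> v < \<phi> x}" by auto
  moreover have "inj_on \<phi> {v \<in> e. \<phi> v < \<phi> x}"
    using assms by (blast intro: inj_on_subset)
  ultimately show ?thesis
    using inj_on_image_mem_iff[OF assms(1,3,2)] by (simp add: class_index_def card_image)
qed

lemma two_edges_in_T_class_iff:
  assumes "r_graph r V E"
  shows "(\<exists>i\<in>{1..2*r+1}. \<exists>e1 e2. e1 \<noteq> e2 \<and> e1 \<in> T_class r E \<sigma> x i \<and> e2 \<in> T_class r E \<sigma> x i)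
    \<longleftrightarrow> \<not> inj_on (class_index r \<sigma> x) E"
proof
  assume "\<exists>i\<in>{1..2*r+1}. \<exists>e1 e2. e1 \<noteq> e2 \<and> e1 \<in> T_class r E \<sigma> x i \<and> e2 \<in> T_class r E \<sigma> x i"
  then show "\<not> inj_on (class_index r \<sigma> x) E"
    unfolding T_class_iff[OF assms] inj_on_def by metis
next
  assume "\<not> inj_on (class_index r \<sigma> x) E"
  then obtain e1 e2 where e: "e1 \<in> E" "e2 \<in> E" "e1 \<noteq> e2"
    and same: "class_index r \<sigma> x e1 = class_index r \<sigma> x e2"
    unfolding inj_on_def by blast
  moreover have "class_index r \<sigma> x e1 \<in> {1..2*r+1}"
    using class_index_range r_graph_edge[OF assms e(1)] by simp
  ultimately show "\<exists>i\<in>{1..2*r+1}. \<exists>e1 e2. e1 \<noteq> e2 \<and> e1 \<in> T_class r E \<sigma> x i \<and> e2 \<in> T_class r E \<sigma> x i"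
    unfolding T_class_iff[OF assms] by metis
qed

lemma two_locally_large_iff:
  assumes "r_graph r V E"
  shows "two_locally_large r V E \<longleftrightarrow>
    (\<exists>\<sigma>::'a \<Rightarrow> nat. inj_on \<sigma> V \<and> (\<forall>x\<in>V. \<not> inj_on (class_index r \<sigma> x) E))"
  unfolding two_locally_large_def two_edges_in_T_class_iff[OF assms]
proof
  assume "\<exists>\<sigma>. bij_betw \<sigma> V {1..card V} \<and> (\<forall>x\<in>V. \<not> inj_on (class_index r \<sigma> x) E)"
  then show "\<exists>\<sigma>::'a \<Rightarrow> nat. inj_on \<sigma> V \<and> (\<forall>x\<in>V. \<not> inj_on (class_index r \<sigma> x) E)"
    using bij_betw_imp_inj_on by blast
next
  assume "\<exists>\<sigma>::'a \<Rightarrow> nat. inj_on \<sigma> V \<and> (\<forall>x\<in>V. \<not> inj_on (class_index r \<sigma> x) E)"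
  then obtain \<sigma> :: "'a \<Rightarrow> nat" where \<sigma>: "inj_on \<sigma> V" "\<forall>x\<in>V. \<not> inj_on (class_index r \<sigma> x) E"
    by blast
  have "finite V"
    using assms by (simp add: r_graph_def)
  then obtain \<tau> where \<tau>: "\<tau> ` V \<subseteq> {1..card V}" "order_equiv_on V \<sigma> \<tau>"
    using order_equiv_on_into[of V "{1..card V}"] by auto
  have "inj_on \<tau> V"
    using order_equiv_on_inj_on[OF \<tau>(2) \<sigma>(1)] .
  then have "bij_betw \<tau> V {1..card V}"
    using \<tau>(1) \<open>finite V\<close> by (simp add: bij_betw_def card_image card_subset_eq)
  moreover have "\<not> inj_on (class_index r \<tau> x) E" if "x \<in> V" for x
  proof -
    have "class_index r \<sigma> x e = class_index r \<tau> x e" if "e \<in> E" for e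
      using class_index_cong[OF \<tau>(2) r_graph_edge(1)[OF assms that] \<open>x \<in> V\<close>] .
    then show ?thesis
      using \<sigma>(2) that inj_on_cong[of E "class_index r \<sigma> x" "class_index r \<tau> x"] by blast
  qed
  ultimately show "\<exists>\<sigma>. bij_betw \<sigma> V {1..card V} \<and> (\<forall>x\<in>V. \<not> inj_on (class_index r \<sigma> x) E)"
    by blast
qed

lemma local_coloring_mono:
  assumes "local_coloring n r V E k f" "k \<le> l"
  shows "local_coloring n r V E l f"
  using assms unfolding local_coloring_def by fastforce

lemma C_r_le:
  assumes "local_coloring n r V E k f"
  shows "C_r r n V E \<le> k"
  unfolding C_r_def using assms by (intro Least_le) blast

(* Needed because C_r is a LEAST, which is unspecified when no colouring exists. *)
lemma ex_local_coloring:
  assumes "r_graph r V E" "V \<noteq> {}"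
  shows "\<exists>k f. local_coloring n r V E k f"
proof -
  have "finite (complete_edges n r)"
    unfolding complete_edges_def by (rule finite_subset[of _ "Pow {0..<n}"]) auto
  then obtain h where h: "bij_betw h (complete_edges n r) {0..<card (complete_edges n r)}"
    using ex_bij_betw_finite_nat by blast
  define f where "f v e = h e + 1" for v :: nat and e
  have "local_coloring n r V E (card (complete_edges n r)) f"
    unfolding local_coloring_def
  proof (intro conjI allI impI ballI)
    fix v e assume "e \<in> complete_edges n r"
    then show "f v e \<in> {1..card (complete_edges n r)}"
      using bij_betwE[OF h] by (force simp: f_def)
  next
    fix \<phi> assume \<phi>: "inj_on \<phi> V \<and> \<phi> ` V \<subseteq> {0..<n}"
    have copy: "(\<lambda>e. \<phi> ` e) ` E \<subseteq> complete_edges n r"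
    proof
      fix e' assume "e' \<in> (\<lambda>e. \<phi> ` e) ` E"
      then obtain e where e: "e \<in> E" "e' = \<phi> ` e" by blast
      then have "e \<subseteq> V" "card e = r" using r_graph_edge[OF assms(1)] by auto
      then show "e' \<in> complete_edges n r"
        using e \<phi> inj_on_subset unfolding complete_edges_def by (fastforce simp: card_image)
    qed
    have "inj_on (f u) (complete_edges n r)" for u
      using bij_betw_imp_inj_on[OF h] unfolding f_def inj_on_def by simp
    then have "inj_on (f u) ((\<lambda>e. \<phi> ` e) ` E)" for u
      using copy by (rule inj_on_subset)
    moreover obtain v where "v \<in> V"
      using assms(2) by blast
    ultimately show "\<exists>u\<in>\<phi> ` V. inj_on (f u) ((\<lambda>e. \<phi> ` e) ` E)"
      by blast
  qed
  then show ?thesis by blast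
qed

lemma local_coloring_C_r:
  assumes "r_graph r V E" "V \<noteq> {}"
  shows "\<exists>f. local_coloring n r V E (C_r r n V E) f"
  unfolding C_r_def using ex_local_coloring[OF assms] by (rule LeastI_ex)

lemma local_coloring_class_index:
  assumes "r_graph r V E" "\<not> two_locally_large r V E"
  shows "local_coloring n r V E (2*r+1) (class_index r (\<lambda>z. z))"
  unfolding local_coloring_def
proof (intro conjI allI impI ballI)
  fix v e assume "e \<in> complete_edges n r"
  then have "finite e" "card e = r"
    unfolding complete_edges_def using finite_subset by auto
  then show "class_index r (\<lambda>z. z) v e \<in> {1..2*r+1}"
    by (rule class_index_range)
next
  fix \<phi> assume "inj_on \<phi> V \<and> \<phi> ` V \<subseteq> {0..<n}"
  then have \<phi>: "inj_on \<phi> V" by blast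
  then obtain x where x: "x \<in> V" and inj: "inj_on (class_index r \<phi> x) E"
    using assms(2) unfolding two_locally_large_iff[OF assms(1)] by blast
  have image: "class_index r (\<lambda>z. z) (\<phi> x) (\<phi> ` e) = class_index r \<phi> x e" if "e \<in> E" for e
    using class_index_image[OF \<phi> r_graph_edge(1)[OF assms(1) that] x] .
  have "inj_on (class_index r (\<lambda>z. z) (\<phi> x) \<circ> (\<lambda>e. \<phi> ` e)) E"
    using inj by (auto simp: inj_on_def image)
  then show "\<exists>u\<in>\<phi> ` V. inj_on (class_index r (\<lambda>z. z) u) ((\<lambda>e. \<phi> ` e) ` E)"
    using x by (blast dest: inj_on_imageI)
qed

lemma partn_finite_colours:
  assumes "finite C"
  shows "\<exists>N::nat. partn {..<N} m s C"
proof -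
  obtain g where g: "bij_betw g C {..<card C}"
    using ex_bij_betw_finite_nat[OF assms] atLeast0LessThan by metis
  obtain N :: nat where N: "partn_lst {..<N} (replicate (card C) m) s"
    using ramsey_full[of "replicate (card C) m" s] by blast
  have "\<exists>\<xi>\<in>C. monochromatic {..<N} m s c \<xi>" if c: "c \<in> nsets {..<N} s \<rightarrow> C" for c
  proof -
    have "g \<circ> c \<in> nsets {..<N} s \<rightarrow> {..<card C}"
      using c bij_betwE[OF g] by auto
    then obtain i H where i: "i < card C" and H: "H \<in> nsets {..<N} m"
      and hom: "(g \<circ> c) ` nsets H s \<subseteq> {i}"
      using partn_lstE[OF N] by (metis length_replicate nth_replicate)
    have "c S = inv_into C g i" if "S \<in> nsets H s" for S
    proof -
      have "c S \<in> C" using c that H nsets_mono[of H "{..<N}" s] by (auto simp: nsets_def)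
      then show ?thesis
        using hom that bij_betw_inv_into_left[OF g] by auto
    qed
    moreover have "inv_into C g i \<in> C"
      using bij_betwE[OF bij_betw_inv_into[OF g]] i by blast
    ultimately show ?thesis
      using H unfolding monochromatic_def by blast
  qed
  then show ?thesis unfolding partn_def by blast
qed

definition pattern :: "nat \<Rightarrow> ('b::linorder \<Rightarrow> 'b set \<Rightarrow> 'c) \<Rightarrow> 'b set \<Rightarrow> nat \<times> nat \<Rightarrow> 'c" where
  "pattern r f S = (\<lambda>J \<in> {..r} \<times> {..r}. f (unrank S (fst J)) (S - {unrank S (snd J)}))"

definition index_pair :: "nat \<Rightarrow> nat \<Rightarrow> nat \<times> nat" where
  "index_pair r i = (if i \<le> r then (i - 1, r) else (i - r - 1, i - r - 1))"

lemma pattern_in_PiE: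
  assumes "local_coloring N r V E k f" "S \<in> nsets {..<N} (r + 1)"
  shows "pattern r f S \<in> (\<Pi>\<^sub>E J \<in> {..r} \<times> {..r}. {1..k})"
proof -
  have S: "S \<subseteq> {..<N}" "finite S" "card S = r + 1"
    using assms(2) by (auto simp: nsets_def)
  have "f (unrank S j) (S - {unrank S l}) \<in> {1..k}" if "j \<le> r" "l \<le> r" for j l
  proof -
    have "unrank S j \<in> S" "unrank S l \<in> S"
      using unrank_in[OF S(2)] S(3) that by auto
    then have "unrank S j \<in> {0..<N}" "S - {unrank S l} \<in> complete_edges N r"
      using S unfolding complete_edges_def by auto
    then show ?thesis
      using assms(1) unfolding local_coloring_def by blast
  qed
  then show ?thesis
    unfolding pattern_def by auto
qed

lemma colour_eq_pattern:
  fixes f :: "'b::linorder \<Rightarrow> 'b set \<Rightarrow> 'c"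
  assumes "finite M" "e \<subseteq> M" "card e = r" "y \<in> M" "\<forall>z\<in>M. z < t"
  shows "\<exists>S \<subseteq> insert t M. card S = r + 1 \<and>
    f y e = pattern r f S (index_pair r (class_index r (\<lambda>z. z) y e))"
proof -
  have e: "finite e" "t \<notin> e" using assms finite_subset by auto
  define c where "c = card {z \<in> e. z < y}"
  have "c \<le> r"
    unfolding c_def using card_mono[of e "{z \<in> e. z < y}"] e assms(3) by auto
  show ?thesis
  proof (cases "y \<in> e")
    case True
    define S where "S = insert t e"
    have S: "finite S" "card S = r + 1" "t \<in> S" "y \<in> S" "S - {t} = e"
      using e True assms(3) by (auto simp: S_def)
    have "{z \<in> S. z < t} = e" "{z \<in> S. z < y} = {z \<in> e. z < y}"
      using assms(2,4,5) True by (auto simp: S_def)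
    then have "rank S t = r" "rank S y = c"
      by (simp_all add: rank_def c_def assms(3))
    then have "unrank S r = t" "unrank S c = y"
      using unrank_rank[OF S(1)] S by metis+
    moreover have "c < r"
      using rank_less_card[OF e(1) True] assms(3) by (simp add: rank_def c_def)
    ultimately have "f y e = pattern r f S (index_pair r (class_index r (\<lambda>z. z) y e))"
      using True S(5) by (simp add: pattern_def index_pair_def class_index_def c_def)
    moreover have "S \<subseteq> insert t M"
      using assms(2) by (auto simp: S_def)
    ultimately show ?thesis
      using S(2) by blast
  next
    case False
    define S where "S = insert y e"
    have S: "finite S" "card S = r + 1" "y \<in> S" "S - {y} = e"
      using e False assms(3) by (auto simp: S_def)
    have "{z \<in> S. z < y} = {z \<in> e. z < y}"
      by (auto simp: S_def)
    then have "rank S y = c"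
      by (simp add: rank_def c_def)
    then have "unrank S c = y"
      using unrank_rank[OF S(1,3)] by simp
    then have "f y e = pattern r f S (index_pair r (class_index r (\<lambda>z. z) y e))"
      using False S(4) \<open>c \<le> r\<close> by (simp add: pattern_def index_pair_def class_index_def c_def)
    moreover have "S \<subseteq> insert t M"
      using assms(2,4) by (auto simp: S_def)
    ultimately show ?thesis
      using S(2) by blast
  qed
qed

lemma inj_on_class_index_if_homogeneous:
  assumes G: "r_graph r V E" and f: "local_coloring N r V E k f" and \<sigma>: "inj_on \<sigma> V"
    and H: "H \<in> nsets {..<N} (card V + 1)" and hom: "pattern r f ` nsets H (r + 1) \<subseteq> {\<xi>}"
  obtains x where "x \<in> V" "inj_on (class_index r \<sigma> x) E"
proof -
  note edge = r_graph_edge[OF G]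
  have finV: "finite V"
    using G by (simp add: r_graph_def)
  have H: "H \<subseteq> {..<N}" "finite H" "card H = card V + 1"
    using H by (auto simp: nsets_def)
  define t where "t = Max H"
  define M where "M = H - {t}"
  have "H \<noteq> {}"
    using H(3) by auto
  then have "t \<in> H"
    using H(2) Max_in unfolding t_def by blast
  then have M: "finite M" "card M = card V" "\<forall>z\<in>M. z < t" "insert t M = H"
    using H Max_ge[of H] by (auto simp: M_def t_def order.order_iff_strict)
  obtain \<psi> where \<psi>: "\<psi> ` V \<subseteq> M" "order_equiv_on V \<sigma> \<psi>"
    using order_equiv_on_into[OF finV M(1)] M(2) by auto
  have inj\<psi>: "inj_on \<psi> V"
    using order_equiv_on_inj_on[OF \<psi>(2) \<sigma>] .
  moreover have "M \<subseteq> {0..<N}"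
    using H(1) M(4) by auto
  then have "\<psi> ` V \<subseteq> {0..<N}"
    using \<psi>(1) by blast
  ultimately obtain x where x: "x \<in> V" and inj: "inj_on (f (\<psi> x)) ((\<lambda>e. \<psi> ` e) ` E)"
    using f unfolding local_coloring_def by blast
  have colour: "f (\<psi> x) (\<psi> ` e) = \<xi> (index_pair r (class_index r \<sigma> x e))" if "e \<in> E" for e
  proof -
    have "class_index r (\<lambda>z. z) (\<psi> x) (\<psi> ` e) = class_index r \<sigma> x e"
      using class_index_image[OF inj\<psi>] class_index_cong[OF \<psi>(2)] edge[OF that] x by simp
    moreover have "\<psi> ` e \<subseteq> M" "card (\<psi> ` e) = r" "\<psi> x \<in> M"
      using \<psi>(1) x edge[OF that] card_image[OF inj_on_subset[OF inj\<psi>]] by auto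
    ultimately obtain S where S: "S \<subseteq> H" "card S = r + 1"
      and "f (\<psi> x) (\<psi> ` e) = pattern r f S (index_pair r (class_index r \<sigma> x e))"
      using colour_eq_pattern[OF M(1) _ _ _ M(3)] M(4) by metis
    moreover have "S \<in> nsets H (r + 1)"
      using S H(2) finite_subset by (auto simp: nsets_def)
    ultimately show ?thesis
      using hom by auto
  qed
  have "inj_on (class_index r \<sigma> x) E"
  proof (rule inj_onI)
    fix e1 e2 assume e: "e1 \<in> E" "e2 \<in> E" "class_index r \<sigma> x e1 = class_index r \<sigma> x e2"
    then have "f (\<psi> x) (\<psi> ` e1) = f (\<psi> x) (\<psi> ` e2)"
      using colour by simp
    then have "\<psi> ` e1 = \<psi> ` e2"
      using inj_onD[OF inj] e(1,2) by blast
    then show "e1 = e2"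
      using inj_on_image_eq_iff[OF inj\<psi>] edge(1) e by blast
  qed
  then show ?thesis
    using that x by blast
qed

lemma two_locally_large_no_local_coloring:
  assumes G: "r_graph r V E" and "two_locally_large r V E"
  shows "\<exists>N. \<forall>f. \<not> local_coloring N r V E k f"
proof -
  obtain \<sigma> :: "'a \<Rightarrow> nat" where \<sigma>: "inj_on \<sigma> V" "\<forall>x\<in>V. \<not> inj_on (class_index r \<sigma> x) E"
    using assms two_locally_large_iff by blast
  have "finite (\<Pi>\<^sub>E J \<in> {..r} \<times> {..r}. {1..k})"
    by (simp add: finite_PiE)
  then obtain N :: nat where N: "partn {..<N} (card V + 1) (r + 1) (\<Pi>\<^sub>E J \<in> {..r} \<times> {..r}. {1..k})"
    using partn_finite_colours by blast
  have "\<not> local_coloring N r V E k f" for f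
  proof
    assume f: "local_coloring N r V E k f"
    then have "pattern r f \<in> nsets {..<N} (r + 1) \<rightarrow> (\<Pi>\<^sub>E J \<in> {..r} \<times> {..r}. {1..k})"
      using pattern_in_PiE by blast
    then obtain \<xi> H where "H \<in> nsets {..<N} (card V + 1)" "pattern r f ` nsets H (r + 1) \<subseteq> {\<xi>}"
      using N unfolding partn_def monochromatic_def by blast
    then show False
      using inj_on_class_index_if_homogeneous[OF G f \<sigma>(1)] \<sigma>(2) by metis
  qed
  then show ?thesis by blast
qed

theorem theorem7:
  fixes r :: nat and V :: "'a set" and E :: "'a set set"
  assumes "r \<ge> 2" and "r_graph r V E" and "V \<noteq> {}"
  shows "(\<exists>C::nat. \<forall>n. C_r r n V E \<le> C) \<longleftrightarrow> \<not> two_locally_large r V E"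
proof
  assume "\<exists>C::nat. \<forall>n. C_r r n V E \<le> C"
  then obtain C where C: "\<And>n. C_r r n V E \<le> C" by blast
  show "\<not> two_locally_large r V E"
  proof
    assume "two_locally_large r V E"
    then obtain N where "\<forall>f. \<not> local_coloring N r V E C f"
      using two_locally_large_no_local_coloring assms(2) by blast
    moreover obtain f where "local_coloring N r V E (C_r r N V E) f"
      using local_coloring_C_r assms(2,3) by blast
    ultimately show False
      using local_coloring_mono C by blast
  qed
next
  assume "\<not> two_locally_large r V E"
  then have "C_r r n V E \<le> 2*r+1" for n
    using C_r_le local_coloring_class_index assms(2) by blast
  then show "\<exists>C::nat. \<forall>n. C_r r n V E \<le> C" by blast
qed

end
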